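(* Let $\Pi_n\sim ESC_{[n]}(P_{\boldsymbol{\mu}})$ with $\mu_1>0$ $P_{\boldsymbol{\mu}}$-a.s., and let $\mathbf{z}=(z_1,\dots,z_n)$ be cluster allocation variables of $\Pi_n$. Fix $i\in\{1,\dots,n\}$, let $\mathbf{z}_{-i}$ denote the allocations of the other $n-1$ points, let $k_{-i}$ be the number of clusters of $\mathbf{z}_{-i}$ (labelled $1,\dots,k_{-i}$) and let $s_j$ be the number of points $i'\ne i$ in cluster $j$. Then $$\mathbb{P}(z_i=j\mid\mathbf{z}_{-i},\boldsymbol{\mu})\propto\begin{cases}(s_j+1)\dfrac{\mu_{s_j+1}}{\mu_{s_j}}, & j=1,\dots,k_{-i},\\[2mm] (k_{-i}+1)\,\mu_1, & j=k_{-i}+1\ \text{(a new cluster)},\end{cases}$$ where the proportionality constant does not depend on $j$.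
   Context: The ESC model $ESC_{[n]}(P_{\boldsymbol{\mu}})$: $P_{\boldsymbol{\mu}}$ is a distribution on probability distributions $\boldsymbol{\mu}=(\mu_s)_{s\ge1}$ on $\{1,2,\dots\}$. Sample $\boldsymbol{\mu}\sim P_{\boldsymbol{\mu}}$ and, given $\boldsymbol{\mu}$, $S_1,S_2,\dots$ i.i.d. with law $\boldsymbol{\mu}$. Let $E_n$ be the event that some partial sum $\sum_{j=1}^k S_j$ equals $n$; everything is conditioned on $E_n$. On $E_n$, $K$ is the unique integer with $\sum_{j=1}^K S_j=n$, and $(z_1,\dots,z_n)$ is a uniformly random permutation of the vector with $S_1$ copies of $1$, ..., $S_K$ copies of $K$; $\Pi_n$ is the partition of $[n]$ with blocks $\{i:z_i=j\}$. Cluster labels are regarded as exchangeable, i.e. the statement concerns the induced partition of $[n]$ (which cluster of $\mathbf{z}_{-i}$ point $i$ joins, or whether it forms a new singleton). *)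

theory Defs
  imports "HOL-Probability.Probability" "HOL-Combinatorics.Permutations"
    "HOL-Library.Disjoint_Sets"
begin

text \<open>ESC model, conditionally on a fixed cluster-size distribution mu (a pmf on
  the positive integers).  Points are 1..n.\<close>

text \<open>Possible values of (S_1,...,S_K) on the event E_n: sequences of positive
  integers summing to n.  Given mu, the probability that the i.i.d. draws start with
  exactly these values is the product of the pmf values.\<close>
definition esc_comps :: "nat \<Rightarrow> nat list set" where
  "esc_comps n = {ss. (\<forall>s\<in>set ss. 0 < s) \<and> sum_list ss = n}"

definition esc_seq_weight :: "nat pmf \<Rightarrow> nat list \<Rightarrow> real" where
  "esc_seq_weight mu ss = prod_list (map (pmf mu) ss)"

definition esc_PE :: "nat pmf \<Rightarrow> nat \<Rightarrow> real" where
  "esc_PE mu n = (\<Sum>ss\<in>esc_comps n. esc_seq_weight mu ss)"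

definition esc_label_vec :: "nat list \<Rightarrow> nat list" where
  "esc_label_vec ss = concat (map (\<lambda>j. replicate (ss ! j) (Suc j)) [0..<length ss])"

text \<open>Uniformly random permutation of that vector: z_p = w_(sigma p), sigma a uniform
  permutation of the positions {1..n}; the induced partition of {1..n}.\<close>
definition esc_partition :: "nat \<Rightarrow> nat list \<Rightarrow> (nat \<Rightarrow> nat) \<Rightarrow> nat set set" where
  "esc_partition n ss \<sigma> =
     (\<lambda>j. {p \<in> {1..n}. esc_label_vec ss ! (\<sigma> p - 1) = j}) ` {1..length ss}"

definition esc_perm_pmf :: "nat \<Rightarrow> (nat \<Rightarrow> nat) pmf" where
  "esc_perm_pmf n = pmf_of_set {\<sigma>. \<sigma> permutes {1..n}}"

text \<open>P(Pi_n = pi | mu), conditioned on E_n.\<close>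
definition esc_prob :: "nat pmf \<Rightarrow> nat \<Rightarrow> nat set set \<Rightarrow> real" where
  "esc_prob mu n \<pi> =
     (\<Sum>ss\<in>esc_comps n. esc_seq_weight mu ss *
        measure_pmf.prob (esc_perm_pmf n) {\<sigma>. esc_partition n ss \<sigma> = \<pi>}) / esc_PE mu n"

definition remove_point :: "nat \<Rightarrow> nat set set \<Rightarrow> nat set set" where
  "remove_point i \<pi> = (\<lambda>B. B - {i}) ` \<pi> - {{}}"

definition esc_prob_rest :: "nat pmf \<Rightarrow> nat \<Rightarrow> nat \<Rightarrow> nat set set \<Rightarrow> real" where
  "esc_prob_rest mu n i \<rho> =
     (\<Sum>\<pi>\<in>{\<pi>. partition_on {1..n} \<pi> \<and> remove_point i \<pi> = \<rho>}. esc_prob mu n \<pi>)"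

definition esc_cond :: "nat pmf \<Rightarrow> nat \<Rightarrow> nat \<Rightarrow> nat set set \<Rightarrow> nat set set \<Rightarrow> real" where
  "esc_cond mu n i \<rho> \<pi> =
     (if remove_point i \<pi> = \<rho> then esc_prob mu n \<pi> else 0) / esc_prob_rest mu n i \<rho>"

end

theory Submission
  imports Defs "HOL-Combinatorics.Multiset_Permutations"
begin

(*
  Given mu, the ESC partition has an exchangeable partition probability function:
    P(Pi_n = pi | mu) = |pi|! * prod_{B in pi} mu_|B| * |B|!  /  (n! * P(E_n | mu)).
  An ordering (B_1, ..., B_k) of the blocks of pi arises from exactly one size sequence,
  namely (|B_1|, ..., |B_k|), and then from exactly prod_j |B_j|! of the n! permutations:
  those mapping each B_j onto the positions that carry label j.  Adding point i to a
  block B of rho, or opening the singleton {i}, multiplies this weight by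
  (|B|+1) mu_{|B|+1} / mu_|B|, resp. (|rho|+1) mu_1, while the normalising constant
  P(Pi_n restricted to [n] - {i} = rho | mu) is common to all choices.
*)

lemma card_maps_onto_fixing_complement:
  assumes "finite A" "finite B" "card A = card B"
  shows "card {g. (\<forall>x. x \<notin> A \<longrightarrow> g x = x) \<and> g ` A = B} = fact (card A)"
proof -
  obtain \<phi> where \<phi>: "bij_betw \<phi> A B" using finite_same_card_bij assms by blast
  define \<psi> where "\<psi> = inv_into A \<phi>"
  have \<psi>: "bij_betw \<psi> B A" unfolding \<psi>_def by (rule bij_betw_inv_into[OF \<phi>])
  let ?G = "{g. (\<forall>x. x \<notin> A \<longrightarrow> g x = x) \<and> g ` A = B}"
  let ?to = "\<lambda>p x. if x \<in> A then \<phi> (p x) else x"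
  let ?from = "\<lambda>g x. if x \<in> A then \<psi> (g x) else x"
  have "bij_betw ?to {p. p permutes A} ?G"
  proof (rule bij_betw_byWitness[where f' = ?from])
    show "\<forall>p\<in>{p. p permutes A}. ?from (?to p) = p"
      using \<phi> by (auto simp: fun_eq_iff \<psi>_def permutes_in_image permutes_not_in bij_betw_def)
    show "\<forall>g\<in>?G. ?to (?from g) = g"
      using \<phi> by (auto simp: fun_eq_iff \<psi>_def bij_betw_def intro!: f_inv_into_f)
    show "?to ` {p. p permutes A} \<subseteq> ?G"
    proof (rule image_subsetI)
      fix p assume "p \<in> {p. p permutes A}"
      then have p: "p permutes A" by simp
      have "?to p ` A = \<phi> ` p ` A" by (auto simp: image_image)
      then have "?to p ` A = B" using \<phi> permutes_image[OF p] by (simp add: bij_betw_def)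
      then show "?to p \<in> ?G" by simp
    qed
    show "?from ` ?G \<subseteq> {p. p permutes A}"
    proof (rule image_subsetI)
      fix g assume "g \<in> ?G"
      then have out: "\<forall>x. x \<notin> A \<longrightarrow> g x = x" and gA: "g ` A = B" by auto
      have "bij_betw g A B" using gA assms by (simp add: bij_betw_def eq_card_imp_inj_on)
      then have "bij_betw (\<psi> \<circ> g) A A" using \<psi> by (rule bij_betw_trans)
      then have "bij_betw (?from g) A A" by (rule bij_betw_cong[THEN iffD1, rotated]) (simp add: comp_def)
      then have "?from g permutes A" by (rule bij_imp_permutes) simp
      then show "?from g \<in> {p. p permutes A}" by simp
    qed
  qed
  then have "card {p. p permutes A} = card ?G" by (rule bij_betw_same_card)
  then show ?thesis using card_permutations[OF refl assms(1)] by simp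
qed

definition block_maps :: "'a set list \<Rightarrow> 'a set list \<Rightarrow> ('a \<Rightarrow> 'a) set" where
  "block_maps As Bs =
     {f. (\<forall>x. x \<notin> \<Union>(set As) \<longrightarrow> f x = x) \<and> list_all2 (\<lambda>A B. f ` A = B) As Bs}"

lemma block_maps_Nil: "block_maps [] [] = {id}"
  by (auto simp: block_maps_def fun_eq_iff)

lemma block_maps_single: "block_maps [A] [B] = {g. (\<forall>x. x \<notin> A \<longrightarrow> g x = x) \<and> g ` A = B}"
  by (simp add: block_maps_def)

lemma bij_betw_block_maps_Cons:
  assumes "\<forall>A'\<in>set As. disjnt A A'"
  shows "bij_betw (\<lambda>(g, h). override_on h g A)
           (block_maps [A] [B] \<times> block_maps As Bs) (block_maps (A # As) (B # Bs))"
proof -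
  have image_override_on: "override_on h g A ` A' = h ` A'" if "A' \<in> set As" for g h :: "'a \<Rightarrow> 'a" and A'
    using assms that by (auto simp: override_on_def disjnt_iff image_def)
  have unmerge: "override_on id (override_on h g A) A = g \<and> override_on (override_on h g A) id A = h"
    if "g \<in> block_maps [A] [B]" "h \<in> block_maps As Bs" for g h
    using assms that by (auto simp: block_maps_def override_on_def fun_eq_iff disjnt_iff)
  have merge: "override_on h g A \<in> block_maps (A # As) (B # Bs)"
    if g: "g \<in> block_maps [A] [B]" and h: "h \<in> block_maps As Bs" for g h
  proof -
    have "list_all2 (\<lambda>A' B'. h ` A' = B') As Bs" using h by (simp add: block_maps_def)
    then have "list_all2 (\<lambda>A' B'. override_on h g A ` A' = B') As Bs"
      by (rule list.rel_mono_strong) (simp add: image_override_on)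
    moreover have "override_on h g A ` A = B" using g by (simp add: block_maps_def override_on_def)
    ultimately show ?thesis using g h by (auto simp: block_maps_def override_on_def)
  qed
  have restrict: "override_on id f A \<in> block_maps [A] [B] \<and> override_on f id A \<in> block_maps As Bs"
    if f: "f \<in> block_maps (A # As) (B # Bs)" for f
  proof -
    have "list_all2 (\<lambda>A' B'. f ` A' = B') As Bs" using f by (simp add: block_maps_def)
    then have "list_all2 (\<lambda>A' B'. override_on f id A ` A' = B') As Bs"
      by (rule list.rel_mono_strong) (simp add: image_override_on)
    then show ?thesis using f by (auto simp: block_maps_def override_on_def)
  qed
  have recombine: "override_on (override_on f id A) (override_on id f A) A = f" for f :: "'a \<Rightarrow> 'a"
    by (simp add: override_on_def fun_eq_iff)
  show ?thesis
    using unmerge merge restrict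
    by (intro bij_betw_byWitness[where f' = "\<lambda>f. (override_on id f A, override_on f id A)"])
      (auto simp: recombine)
qed

lemma card_block_maps:
  assumes "list_all2 (\<lambda>A B. finite A \<and> finite B \<and> card A = card B) As Bs"
    and "sorted_wrt disjnt As"
  shows "card (block_maps As Bs) = (\<Prod>A\<leftarrow>As. fact (card A))"
  using assms
proof (induction rule: list_all2_induct)
  case Nil
  show ?case by (simp add: block_maps_Nil)
next
  case (Cons A As B Bs)
  have "card (block_maps (A # As) (B # Bs)) = card (block_maps [A] [B] \<times> block_maps As Bs)"
    using bij_betw_block_maps_Cons[of As A B Bs] Cons.prems by (simp add: bij_betw_same_card)
  also have "\<dots> = fact (card A) * (\<Prod>A\<leftarrow>As. fact (card A))"
    using Cons by (simp add: card_cartesian_product block_maps_single card_maps_onto_fixing_complement)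
  finally show ?case by simp
qed

lemma block_maps_permutes:
  assumes "f \<in> block_maps As Bs" "\<Union>(set As) = S" "\<Union>(set Bs) = S" "finite S"
  shows "f permutes S"
proof -
  have "list_all2 (\<lambda>A B. f ` A = B) As Bs" using assms(1) by (simp add: block_maps_def)
  then have "f ` \<Union>(set As) = \<Union>(set Bs)"
    by (induction rule: list_all2_induct) (auto simp: image_Un)
  then have "f ` S = S" using assms(2,3) by simp
  then have "bij_betw f S S" using assms(4) by (simp add: bij_betw_def eq_card_imp_inj_on)
  then show ?thesis using assms(1,2) by (intro bij_imp_permutes) (auto simp: block_maps_def)
qed

lemma length_esc_label_vec: "length (esc_label_vec ss) = sum_list ss"
  unfolding esc_label_vec_def by (simp add: length_concat comp_def map_nth)

lemma set_esc_label_vec: "set (esc_label_vec ss) \<subseteq> {1..length ss}"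
  unfolding esc_label_vec_def by auto

lemma count_esc_label_vec:
  assumes "j < length ss"
  shows "length (filter (\<lambda>x. x = Suc j) (esc_label_vec ss)) = ss ! j"
proof -
  have "length (filter (\<lambda>x. x = Suc j) (esc_label_vec ss))
      = sum_list (map (\<lambda>j'. if j' = j then ss ! j' else 0) [0..<length ss])"
    unfolding esc_label_vec_def filter_concat length_concat map_map
    by (intro arg_cong[where f=sum_list] map_cong) (auto simp: filter_replicate)
  also have "\<dots> = ss ! j"
    using assms by (simp add: interv_sum_list_conv_sum_set_nat)
  finally show ?thesis .
qed

definition esc_label_set :: "nat \<Rightarrow> nat list \<Rightarrow> nat \<Rightarrow> nat set" where
  "esc_label_set n ss j = {q \<in> {1..n}. esc_label_vec ss ! (q - 1) = j}"

lemma esc_label_set_subset: "esc_label_set n ss j \<subseteq> {1..n}"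
  unfolding esc_label_set_def by auto

lemma card_esc_label_set:
  assumes "sum_list ss = n" "j < length ss"
  shows "card (esc_label_set n ss (Suc j)) = ss ! j"
proof -
  let ?w = "esc_label_vec ss"
  have "esc_label_set n ss (Suc j) = Suc ` {q. q < length ?w \<and> ?w ! q = Suc j}"
    using assms(1) by (force simp: esc_label_set_def length_esc_label_vec image_iff)
  then have "card (esc_label_set n ss (Suc j)) = length (filter (\<lambda>x. x = Suc j) ?w)"
    by (simp add: card_image length_filter_conv_card)
  with count_esc_label_vec[OF assms(2)] show ?thesis by simp
qed

lemma Union_esc_label_sets:
  assumes "sum_list ss = n"
  shows "(\<Union>j\<in>{1..length ss}. esc_label_set n ss j) = {1..n}"
proof -
  have "esc_label_vec ss ! (q - 1) \<in> {1..length ss}" if "q \<in> {1..n}" for q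
  proof -
    have "q - 1 < length (esc_label_vec ss)" using that assms by (auto simp: length_esc_label_vec)
    then show ?thesis using nth_mem set_esc_label_vec by blast
  qed
  then show ?thesis by (auto simp: esc_label_set_def)
qed

definition esc_blocks :: "nat \<Rightarrow> nat list \<Rightarrow> (nat \<Rightarrow> nat) \<Rightarrow> nat set list" where
  "esc_blocks n ss \<sigma> =
     map (\<lambda>j. {p \<in> {1..n}. esc_label_vec ss ! (\<sigma> p - 1) = j}) [1..<Suc (length ss)]"

lemma set_esc_blocks: "set (esc_blocks n ss \<sigma>) = esc_partition n ss \<sigma>"
  by (simp add: esc_blocks_def esc_partition_def atLeastLessThanSuc_atLeastAtMost del: upt_Suc)

lemma length_esc_blocks [simp]: "length (esc_blocks n ss \<sigma>) = length ss"
  by (simp add: esc_blocks_def del: upt_Suc)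

lemma nth_esc_blocks:
  assumes "\<sigma> permutes {1..n}" "j < length ss"
  shows "esc_blocks n ss \<sigma> ! j = \<sigma> -` esc_label_set n ss (Suc j)"
  using assms(2) esc_label_set_subset[of n ss "Suc j"] permutes_in_image[OF assms(1)]
  by (auto simp: esc_blocks_def esc_label_set_def nth_append simp del: upt_Suc)

lemma map_card_esc_blocks:
  assumes "\<sigma> permutes {1..n}" "ss \<in> esc_comps n"
  shows "map card (esc_blocks n ss \<sigma>) = ss"
proof (rule nth_equalityI)
  fix j assume "j < length (map card (esc_blocks n ss \<sigma>))"
  then have j: "j < length ss" by simp
  have "card (\<sigma> -` esc_label_set n ss (Suc j)) = card (esc_label_set n ss (Suc j))"
    using permutes_bij[OF assms(1)] by (intro card_vimage_inj) (auto simp: bij_def)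
  then show "map card (esc_blocks n ss \<sigma>) ! j = ss ! j"
    using assms j by (simp add: nth_esc_blocks card_esc_label_set esc_comps_def)
qed simp

lemma distinct_esc_blocks:
  assumes "\<sigma> permutes {1..n}" "ss \<in> esc_comps n"
  shows "distinct (esc_blocks n ss \<sigma>)"
proof -
  let ?bs = "esc_blocks n ss \<sigma>"
  have "?bs ! i \<noteq> ?bs ! j" if "i < j" "j < length ss" for i j
  proof
    assume eq: "?bs ! i = ?bs ! j"
    have "?bs ! i \<inter> ?bs ! j = {}"
      using that by (auto simp: esc_blocks_def simp del: upt_Suc)
    then have "card (?bs ! i) = 0" using eq by simp
    moreover have "card (?bs ! i) = ss ! i"
      using map_card_esc_blocks[OF assms] that by (metis length_esc_blocks nth_map order.strict_trans)
    moreover have "ss ! i \<in> set ss" using that by simp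
    ultimately show False
      using assms(2) by (auto simp: esc_comps_def)
  qed
  then show ?thesis by (metis distinct_conv_nth length_esc_blocks linorder_neqE_nat)
qed

lemma esc_blocks_eq_iff:
  assumes \<sigma>: "\<sigma> permutes {1..n}" and len: "length bs = length ss"
  shows "esc_blocks n ss \<sigma> = bs \<longleftrightarrow>
           list_all2 (\<lambda>B L. \<sigma> ` B = L) bs (map (esc_label_set n ss) [1..<Suc (length ss)])"
proof -
  have "bij \<sigma>" using permutes_bij[OF \<sigma>] .
  then have vimage_eq_iff: "\<sigma> -` L = B \<longleftrightarrow> \<sigma> ` B = L" for B L
    by (metis bij_def inj_vimage_image_eq surj_image_vimage_eq)
  have nth_eq_iff: "esc_blocks n ss \<sigma> ! j = bs ! j \<longleftrightarrow>
      \<sigma> ` (bs ! j) = map (esc_label_set n ss) [1..<Suc (length ss)] ! j"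
    if "j < length ss" for j
    using that by (simp add: nth_esc_blocks[OF \<sigma>] vimage_eq_iff nth_map_upt del: upt_Suc)
  show ?thesis
  proof
    assume "esc_blocks n ss \<sigma> = bs"
    then show "list_all2 (\<lambda>B L. \<sigma> ` B = L) bs (map (esc_label_set n ss) [1..<Suc (length ss)])"
      using len nth_eq_iff by (intro list_all2_all_nthI) (simp_all del: upt_Suc)
  next
    assume "list_all2 (\<lambda>B L. \<sigma> ` B = L) bs (map (esc_label_set n ss) [1..<Suc (length ss)])"
    then show "esc_blocks n ss \<sigma> = bs"
      using len nth_eq_iff by (intro nth_equalityI) (simp_all add: list_all2_conv_all_nth del: upt_Suc)
  qed
qed

lemma map_card_in_esc_comps:
  assumes "distinct bs" "partition_on {1..n} (set bs)"
  shows "map card bs \<in> esc_comps n"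
proof -
  have U: "\<Union>(set bs) = {1..n}" and disj: "disjoint (set bs)" and ne: "{} \<notin> set bs"
    using assms(2) by (auto simp: partition_on_def)
  have fin: "\<forall>B\<in>set bs. finite B"
    using U by (metis Union_upper finite_atLeastAtMost finite_subset)
  have "sum_list (map card bs) = card (\<Union>(set bs))"
    using assms(1) disj fin by (simp add: sum_list_distinct_conv_sum_set card_Union_disjoint)
  then show ?thesis
    using U fin ne by (auto simp: esc_comps_def card_gt_0_iff)
qed

lemma card_esc_blocks_fibre:
  assumes "distinct bs" "partition_on {1..n} (set bs)"
  shows "card {\<sigma>. \<sigma> permutes {1..n} \<and> esc_blocks n (map card bs) \<sigma> = bs} = (\<Prod>B\<leftarrow>bs. fact (card B))"
proof -
  let ?ss = "map card bs"
  let ?Ls = "map (esc_label_set n ?ss) [1..<Suc (length bs)]"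
  have U: "\<Union>(set bs) = {1..n}" and disj: "disjoint (set bs)"
    using assms(2) by (auto simp: partition_on_def)
  have fin: "\<forall>B\<in>set bs. finite B"
    using U by (metis Union_upper finite_atLeastAtMost finite_subset)
  have sum: "sum_list ?ss = n" using map_card_in_esc_comps[OF assms] by (simp add: esc_comps_def)
  have UL: "\<Union>(set ?Ls) = {1..n}"
    using Union_esc_label_sets[OF sum] by (simp add: atLeastLessThanSuc_atLeastAtMost del: upt_Suc)
  have "\<sigma> permutes {1..n} \<and> esc_blocks n ?ss \<sigma> = bs \<longleftrightarrow> \<sigma> \<in> block_maps bs ?Ls" for \<sigma>
  proof
    assume "\<sigma> permutes {1..n} \<and> esc_blocks n ?ss \<sigma> = bs"
    then show "\<sigma> \<in> block_maps bs ?Ls"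
      using U esc_blocks_eq_iff[of \<sigma> n bs ?ss]
      by (auto simp: block_maps_def permutes_not_in simp del: upt_Suc)
  next
    assume \<sigma>: "\<sigma> \<in> block_maps bs ?Ls"
    have "\<sigma> permutes {1..n}" by (rule block_maps_permutes[OF \<sigma> U UL]) simp
    then show "\<sigma> permutes {1..n} \<and> esc_blocks n ?ss \<sigma> = bs"
      using \<sigma> esc_blocks_eq_iff[of \<sigma> n bs ?ss] by (simp add: block_maps_def del: upt_Suc)
  qed
  then have "{\<sigma>. \<sigma> permutes {1..n} \<and> esc_blocks n ?ss \<sigma> = bs} = block_maps bs ?Ls" by blast
  moreover have "list_all2 (\<lambda>A B. finite A \<and> finite B \<and> card A = card B) bs ?Ls"
    using fin sum finite_subset[OF esc_label_set_subset]
    by (auto simp: list_all2_conv_all_nth card_esc_label_set simp del: upt_Suc)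
  moreover have "sorted_wrt disjnt bs"
    using assms(1) disj
    by (auto simp: sorted_wrt_iff_nth_less pairwise_def nth_eq_iff_index_eq)
  ultimately show ?thesis by (simp add: card_block_maps)
qed

lemma card_esc_partition_fibre:
  assumes "ss \<in> esc_comps n"
  shows "card {\<sigma>. \<sigma> permutes {1..n} \<and> esc_partition n ss \<sigma> = \<pi>}
       = (\<Sum>bs\<in>permutations_of_set \<pi>. card {\<sigma>. \<sigma> permutes {1..n} \<and> esc_blocks n ss \<sigma> = bs})"
proof -
  have "\<sigma> permutes {1..n} \<and> esc_partition n ss \<sigma> = \<pi> \<longleftrightarrow>
      (\<exists>bs\<in>permutations_of_set \<pi>. \<sigma> permutes {1..n} \<and> esc_blocks n ss \<sigma> = bs)" for \<sigma>
    using distinct_esc_blocks[OF _ assms, of \<sigma>] set_esc_blocks[of n ss \<sigma>]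
    by (auto simp: permutations_of_set_def)
  then have "{\<sigma>. \<sigma> permutes {1..n} \<and> esc_partition n ss \<sigma> = \<pi>}
      = (\<Union>bs\<in>permutations_of_set \<pi>. {\<sigma>. \<sigma> permutes {1..n} \<and> esc_blocks n ss \<sigma> = bs})"
    by blast
  moreover have "finite {\<sigma>. \<sigma> permutes {1..n} \<and> esc_blocks n ss \<sigma> = bs}" for bs
    using finite_permutations[of "{1..n}"] by (rule finite_subset[rotated]) auto
  ultimately show ?thesis
    by (simp only:) (rule card_UN_disjoint; auto)
qed

lemma length_le_sum_list_pos: "\<forall>s\<in>set ss. 0 < s \<Longrightarrow> length ss \<le> sum_list (ss :: nat list)"
  by (induction ss) auto

lemma finite_esc_comps: "finite (esc_comps n)"
proof (rule finite_subset)
  show "esc_comps n \<subseteq> {ss. set ss \<subseteq> {0..n} \<and> length ss \<le> n}"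
    unfolding esc_comps_def using length_le_sum_list_pos member_le_sum_list by fastforce
  show "finite {ss. set ss \<subseteq> {0..n} \<and> length ss \<le> n}"
    by (rule finite_lists_length_le) simp
qed

lemma esc_seq_weight_nonneg: "esc_seq_weight mu ss \<ge> 0"
  unfolding esc_seq_weight_def by (rule prod_list_nonneg) auto

definition esc_weight :: "nat pmf \<Rightarrow> nat set set \<Rightarrow> real" where
  "esc_weight mu \<pi> = fact (card \<pi>) * (\<Prod>B\<in>\<pi>. pmf mu (card B) * fact (card B))"

lemma sum_esc_comps_blocks_fibre:
  assumes "bs \<in> permutations_of_set \<pi>" "partition_on {1..n} \<pi>"
  shows "(\<Sum>ss\<in>esc_comps n. esc_seq_weight mu ss *
            card {\<sigma>. \<sigma> permutes {1..n} \<and> esc_blocks n ss \<sigma> = bs})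
       = (\<Prod>B\<in>\<pi>. pmf mu (card B) * fact (card B))"
proof -
  have bs: "distinct bs" "set bs = \<pi>" using assms(1) by (auto dest: permutations_of_setD)
  let ?fibre = "\<lambda>ss. {\<sigma>. \<sigma> permutes {1..n} \<and> esc_blocks n ss \<sigma> = bs}"
  have empty_fibre: "?fibre ss = {}" if "ss \<in> esc_comps n" "ss \<noteq> map card bs" for ss
    using map_card_esc_blocks[OF _ that(1)] that(2) by auto
  have "(\<Sum>ss\<in>esc_comps n. esc_seq_weight mu ss * card (?fibre ss))
      = (\<Sum>ss\<in>esc_comps n. if ss = map card bs then esc_seq_weight mu ss * card (?fibre ss) else 0)"
  proof (intro sum.cong refl)
    fix ss assume ss: "ss \<in> esc_comps n"
    show "esc_seq_weight mu ss * card (?fibre ss)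
        = (if ss = map card bs then esc_seq_weight mu ss * card (?fibre ss) else 0)"
    proof (cases "ss = map card bs")
      case False
      then show ?thesis by (simp only: empty_fibre[OF ss False] card.empty if_False of_nat_0 mult_zero_right)
    qed simp
  qed
  also have "\<dots> = esc_seq_weight mu (map card bs) * card (?fibre (map card bs))"
    using map_card_in_esc_comps[of bs n] bs assms(2)
    by (simp only: sum.delta[OF finite_esc_comps]) simp
  also have "\<dots> = (\<Prod>B\<in>\<pi>. pmf mu (card B)) * (\<Prod>B\<in>\<pi>. fact (card B))"
    using card_esc_blocks_fibre[of bs n] bs assms(2)
    by (simp add: esc_seq_weight_def prod.distinct_set_conv_list[symmetric] comp_def)
  also have "\<dots> = (\<Prod>B\<in>\<pi>. pmf mu (card B) * fact (card B))"
    by (simp add: prod.distrib)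
  finally show ?thesis .
qed

lemma esc_prob_eq:
  assumes "partition_on {1..n} \<pi>"
  shows "esc_prob mu n \<pi> = esc_weight mu \<pi> / (fact n * esc_PE mu n)"
proof -
  let ?fibre = "\<lambda>ss bs. card {\<sigma>. \<sigma> permutes {1..n} \<and> esc_blocks n ss \<sigma> = bs}"
  have fin: "finite \<pi>" using assms finite_elements by blast
  have "measure_pmf.prob (esc_perm_pmf n) {\<sigma>. esc_partition n ss \<sigma> = \<pi>}
      = card {\<sigma>. \<sigma> permutes {1..n} \<and> esc_partition n ss \<sigma> = \<pi>} / fact n" for ss
  proof -
    have "{\<sigma>. \<sigma> permutes {1..n}} \<inter> {\<sigma>. esc_partition n ss \<sigma> = \<pi>}
        = {\<sigma>. \<sigma> permutes {1..n} \<and> esc_partition n ss \<sigma> = \<pi>}" by auto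
    moreover have "{\<sigma>. \<sigma> permutes {1..n}} \<noteq> {}" using permutes_id by blast
    ultimately show ?thesis
      using card_permutations[of "{1..n}" n]
      by (simp add: esc_perm_pmf_def measure_pmf_of_set finite_permutations)
  qed
  then have "esc_prob mu n \<pi> = (\<Sum>ss\<in>esc_comps n. esc_seq_weight mu ss *
      card {\<sigma>. \<sigma> permutes {1..n} \<and> esc_partition n ss \<sigma> = \<pi>}) / (fact n * esc_PE mu n)"
    by (simp add: esc_prob_def sum_divide_distrib)
  also have "(\<Sum>ss\<in>esc_comps n. esc_seq_weight mu ss *
      card {\<sigma>. \<sigma> permutes {1..n} \<and> esc_partition n ss \<sigma> = \<pi>})
    = (\<Sum>ss\<in>esc_comps n. \<Sum>bs\<in>permutations_of_set \<pi>. esc_seq_weight mu ss * ?fibre ss bs)"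
    by (intro sum.cong refl) (simp only: card_esc_partition_fibre of_nat_sum sum_distrib_left)
  also have "\<dots> = (\<Sum>bs\<in>permutations_of_set \<pi>. \<Sum>ss\<in>esc_comps n. esc_seq_weight mu ss * ?fibre ss bs)"
    by (rule sum.swap)
  also have "\<dots> = (\<Sum>bs\<in>permutations_of_set \<pi>. \<Prod>B\<in>\<pi>. pmf mu (card B) * fact (card B))"
    by (intro sum.cong refl) (erule sum_esc_comps_blocks_fibre[OF _ assms])
  also have "\<dots> = esc_weight mu \<pi>"
    using fin by (simp add: esc_weight_def)
  finally show ?thesis .
qed

lemma esc_PE_pos:
  assumes "pmf mu 1 > 0"
  shows "esc_PE mu n > 0"
proof -
  have "replicate n 1 \<in> esc_comps n" by (simp add: esc_comps_def sum_list_replicate)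
  then have "esc_seq_weight mu (replicate n 1) \<le> esc_PE mu n"
    unfolding esc_PE_def
    by (intro member_le_sum finite_esc_comps esc_seq_weight_nonneg)
  moreover have "esc_seq_weight mu (replicate n 1) > 0"
    using assms by (simp add: esc_seq_weight_def)
  ultimately show ?thesis by linarith
qed

lemma esc_prob_nonneg: "esc_prob mu n \<pi> \<ge> 0"
proof -
  have "esc_PE mu n \<ge> 0" unfolding esc_PE_def by (intro sum_nonneg esc_seq_weight_nonneg)
  then show ?thesis unfolding esc_prob_def
    by (intro divide_nonneg_nonneg sum_nonneg mult_nonneg_nonneg esc_seq_weight_nonneg measure_nonneg)
qed

lemma esc_weight_pos: "\<forall>B\<in>\<pi>. pmf mu (card B) > 0 \<Longrightarrow> esc_weight mu \<pi> > 0"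
  unfolding esc_weight_def by (intro mult_pos_pos prod_pos) auto

lemma esc_weight_insert_singleton:
  assumes "finite \<rho>" "{i} \<notin> \<rho>"
  shows "esc_weight mu (insert {i} \<rho>) = real (card \<rho> + 1) * pmf mu 1 * esc_weight mu \<rho>"
  using assms by (simp add: esc_weight_def)

lemma esc_weight_insert_into_block:
  assumes "finite \<rho>" "B \<in> \<rho>" "finite B" "i \<notin> B" "insert i B \<notin> \<rho>"
  shows "esc_weight mu (insert (insert i B) (\<rho> - {B})) * pmf mu (card B)
       = real (card B + 1) * pmf mu (card B + 1) * esc_weight mu \<rho>"
proof -
  let ?f = "\<lambda>B. pmf mu (card B) * fact (card B)"
  have "card (insert (insert i B) (\<rho> - {B})) = Suc (card (\<rho> - {B}))"
    using assms by simp
  also have "\<dots> = card \<rho>" using card.remove[OF assms(1,2)] by (rule sym)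
  finally have card_eq: "card (insert (insert i B) (\<rho> - {B})) = card \<rho>" .
  have prod_insert: "prod ?f (insert (insert i B) (\<rho> - {B})) = ?f (insert i B) * prod ?f (\<rho> - {B})"
    using assms by simp
  have prod_remove: "prod ?f \<rho> = ?f B * prod ?f (\<rho> - {B})"
    by (rule prod.remove[OF assms(1,2)])
  have "esc_weight mu (insert (insert i B) (\<rho> - {B})) * pmf mu (card B)
      = fact (card \<rho>) * (?f (insert i B) * prod ?f (\<rho> - {B})) * pmf mu (card B)"
    by (simp only: esc_weight_def card_eq prod_insert)
  also have "\<dots> = real (card B + 1) * pmf mu (card B + 1) * (fact (card \<rho>) * (?f B * prod ?f (\<rho> - {B})))"
    using assms(3,4) by (simp add: algebra_simps)
  also have "\<dots> = real (card B + 1) * pmf mu (card B + 1) * esc_weight mu \<rho>"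
    by (simp only: esc_weight_def prod_remove)
  finally show ?thesis .
qed

lemma partition_on_insert_singleton:
  assumes "partition_on (A - {i}) \<rho>" "i \<in> A"
  shows "partition_on A (insert {i} \<rho>)"
proof -
  have "disjnt {i} (\<Union>\<rho>)" using partition_onD1[OF assms(1)] by auto
  then show ?thesis using assms by (simp add: partition_on_insert)
qed

lemma partition_on_insert_into_block:
  assumes "partition_on (A - {i}) \<rho>" "i \<in> A" "B \<in> \<rho>"
  shows "partition_on A (insert (insert i B) (\<rho> - {B}))"
proof -
  have U: "\<Union>\<rho> = A - {i}" and disj: "disjoint \<rho>" using assms(1) by (auto simp: partition_on_def)
  have "disjnt B (\<Union>(\<rho> - {B}))"
    using disj assms(3) by (auto simp: disjnt_def pairwise_def)
  moreover have "insert B (\<rho> - {B}) = \<rho>" using assms(3) by blast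
  ultimately have "partition_on (A - {i} - B) (\<rho> - {B})"
    using assms(1) partition_on_insert[of B "\<rho> - {B}" "A - {i}"] by simp
  moreover have "disjnt (insert i B) (\<Union>(\<rho> - {B}))"
    using \<open>disjnt B (\<Union>(\<rho> - {B}))\<close> U by (auto simp: disjnt_def)
  moreover have "A - insert i B = A - {i} - B" by blast
  ultimately show ?thesis
    using assms(2,3) U by (auto simp: partition_on_insert)
qed

lemma remove_point_insert_singleton:
  assumes "i \<notin> \<Union>\<rho>" "{} \<notin> \<rho>"
  shows "remove_point i (insert {i} \<rho>) = \<rho>"
proof -
  have "(\<lambda>B. B - {i}) ` \<rho> = \<rho>" using assms(1) by (auto simp: image_def)
  then show ?thesis using assms(2) by (auto simp: remove_point_def)
qed

lemma remove_point_insert_into_block: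
  assumes "i \<notin> \<Union>\<rho>" "{} \<notin> \<rho>" "B \<in> \<rho>"
  shows "remove_point i (insert (insert i B) (\<rho> - {B})) = \<rho>"
proof -
  have "(\<lambda>B. B - {i}) ` (\<rho> - {B}) = \<rho> - {B}" using assms(1) by (auto simp: image_def)
  moreover have "insert i B - {i} = B" using assms(1,3) by auto
  ultimately show ?thesis using assms(2,3) by (auto simp: remove_point_def)
qed

lemma esc_cond_eq:
  assumes "partition_on {1..n} \<pi>" "remove_point i \<pi> = \<rho>"
  shows "esc_cond mu n i \<rho> \<pi> = esc_weight mu \<pi> / (fact n * esc_PE mu n * esc_prob_rest mu n i \<rho>)"
  using assms by (simp add: esc_cond_def esc_prob_eq)

lemma esc_cond_insert_singleton:
  assumes "i \<in> {1..n}" "partition_on ({1..n} - {i}) \<rho>"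
  shows "esc_cond mu n i \<rho> (insert {i} \<rho>)
       = real (card \<rho> + 1) * pmf mu 1 * esc_weight mu \<rho> / (fact n * esc_PE mu n * esc_prob_rest mu n i \<rho>)"
proof -
  have i: "i \<notin> \<Union>\<rho>" and ne: "{} \<notin> \<rho>" and fin: "finite \<rho>"
    using assms(2) finite_elements[OF _ assms(2)] by (auto simp: partition_on_def)
  then have "{i} \<notin> \<rho>" by blast
  then show ?thesis
    unfolding esc_cond_eq[OF partition_on_insert_singleton[OF assms(2,1)]
        remove_point_insert_singleton[OF i ne]]
    by (simp add: esc_weight_insert_singleton[OF fin])
qed

lemma esc_cond_insert_into_block:
  assumes "i \<in> {1..n}" "partition_on ({1..n} - {i}) \<rho>" "B \<in> \<rho>"
  shows "esc_cond mu n i \<rho> (insert (insert i B) (\<rho> - {B})) * pmf mu (card B)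
       = real (card B + 1) * pmf mu (card B + 1) * esc_weight mu \<rho>
           / (fact n * esc_PE mu n * esc_prob_rest mu n i \<rho>)"
proof -
  have i: "i \<notin> \<Union>\<rho>" and ne: "{} \<notin> \<rho>" and fin: "finite \<rho>"
    using assms(2) finite_elements[OF _ assms(2)] by (auto simp: partition_on_def)
  have "finite B"
    using partition_onD1[OF assms(2)] assms(3)
    by (metis Union_upper finite_Diff finite_atLeastAtMost finite_subset)
  moreover have "i \<notin> B" "insert i B \<notin> \<rho>" using i assms(3) by auto
  ultimately show ?thesis
    unfolding esc_cond_eq[OF partition_on_insert_into_block[OF assms(2,1,3)]
        remove_point_insert_into_block[OF i ne assms(3)]]
    using esc_weight_insert_into_block[OF fin assms(3), of i mu]
    by (simp add: field_simps)
qed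

lemma esc_prob_rest_pos:
  assumes "pmf mu 1 > 0" "i \<in> {1..n}" "partition_on ({1..n} - {i}) \<rho>"
    and "\<forall>B\<in>\<rho>. pmf mu (card B) > 0"
  shows "esc_prob_rest mu n i \<rho> > 0"
proof -
  let ?\<pi> = "insert {i} \<rho>"
  have part: "partition_on {1..n} ?\<pi>" using partition_on_insert_singleton[OF assms(3,2)] .
  have rm: "remove_point i ?\<pi> = \<rho>"
    using assms(3) by (intro remove_point_insert_singleton) (auto simp: partition_on_def)
  have "esc_prob mu n ?\<pi> > 0"
    using esc_weight_pos[of ?\<pi> mu] assms(1,4) esc_PE_pos[OF assms(1)]
    by (simp add: esc_prob_eq[OF part])
  moreover have "esc_prob mu n ?\<pi> \<le> esc_prob_rest mu n i \<rho>"
    unfolding esc_prob_rest_def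
    using part rm finitely_many_partition_on[of "{1..n}"]
    by (intro member_le_sum esc_prob_nonneg) auto
  ultimately show ?thesis by linarith
qed

theorem corollary1:
  fixes mu :: "nat pmf" and n i :: nat and \<rho> :: "nat set set"
  assumes "pmf mu 0 = 0"
    and "pmf mu 1 > 0"
    and "i \<in> {1..n}"
    and "partition_on ({1..n} - {i}) \<rho>"
    and "\<forall>B\<in>\<rho>. pmf mu (card B) > 0"
  shows "\<exists>C>0.
     (\<forall>B\<in>\<rho>. esc_cond mu n i \<rho> (insert (insert i B) (\<rho> - {B}))
                = C * (real (card B + 1) * pmf mu (card B + 1) / pmf mu (card B)))
     \<and> esc_cond mu n i \<rho> (insert {i} \<rho>) = C * (real (card \<rho> + 1) * pmf mu 1)"
proof -
  define C where "C = esc_weight mu \<rho> / (fact n * esc_PE mu n * esc_prob_rest mu n i \<rho>)"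
  have "C > 0"
    using esc_weight_pos[OF assms(5)] esc_PE_pos[OF assms(2)] esc_prob_rest_pos[OF assms(2-5)]
    by (simp add: C_def)
  moreover have "esc_cond mu n i \<rho> (insert {i} \<rho>) = C * (real (card \<rho> + 1) * pmf mu 1)"
    using esc_cond_insert_singleton[OF assms(3,4)] by (simp add: C_def)
  moreover have "esc_cond mu n i \<rho> (insert (insert i B) (\<rho> - {B}))
      = C * (real (card B + 1) * pmf mu (card B + 1) / pmf mu (card B))" if "B \<in> \<rho>" for B
  proof -
    have "pmf mu (card B) \<noteq> 0" using assms(5) that by auto
    then have "esc_cond mu n i \<rho> (insert (insert i B) (\<rho> - {B}))
        = esc_cond mu n i \<rho> (insert (insert i B) (\<rho> - {B})) * pmf mu (card B) / pmf mu (card B)"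
      by simp
    also have "\<dots> = C * (real (card B + 1) * pmf mu (card B + 1) / pmf mu (card B))"
      unfolding esc_cond_insert_into_block[OF assms(3,4) that] by (simp add: C_def mult_ac)
    finally show ?thesis .
  qed
  ultimately show ?thesis by blast
qed

end
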